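(* Let $n\geq 2$. (1) For any $\tau\in S_{n-1}$ and any $I\sqcup J=[2,n]$, there exists $\sigma\in S_n$ such that $A^\sigma_{[2,n],\emptyset}=A^\tau_{I,J}$. (2) For any $\sigma\in S_{n-1}$, the only triple $(\tau,I,J)$ with $\tau\in S_{n-1}$, $I\sqcup J=[2,n]$ and $A^\tau_{I,J}=A^\sigma_{[2,n],\emptyset}$ is $\tau=\sigma$, $I=[2,n]$, $J=\emptyset$. (3) For any $\sigma\in S_{n-1}(1,i)$ with $2\leq i\leq n$, the complete list of triples $(\tau,I,J)$ with $\tau\in S_{n-1}$, $I\sqcup J=[2,n]$ and $A^\tau_{I,J}=A^\sigma_{[2,n],\emptyset}$ is indexed by the sequences $2\leq m_1<\dots<m_{i-1}\leq n$, and is given by $$\tau=\sigma C_{m_{i-1}}^{-1}\cdots C_{m_1}^{-1},\quad I=[2,n]\setminus\{m_1,\dots,m_{i-1}\},\quad J=\{m_1,\dots,m_{i-1}\}.$$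
   Context: Let $w_{ij}$, $1\leq i,j\leq n$, be formal variables subject only to $w_{ij}+w_{ji}=0$ (so they span a free abelian group with basis $w_{ij}$, $i<j$). Let $[2,n]=\{2,\dots,n\}$. For $\sigma\in S_n$ and a disjoint decomposition $I\sqcup J=[2,n]$, set $$A^\sigma_{I,J}:=\sum_{i\in I}\sum_{\ell=1}^{i-1}w_{\sigma(\ell)\sigma(i)}-\sum_{j\in J}\sum_{\ell=1}^{j-1}w_{\sigma(\ell)\sigma(j)}.$$ Permutations are composed right-to-left: $(\sigma\tau)(k)=\sigma(\tau(k))$. $S_{n-1}\subset S_n$ is the subgroup of $\tau$ with $\tau(1)=1$, $S_{n-1}(1,i)=\{\tau\cdot(1,i):\tau\in S_{n-1}\}$, and for $m\geq 2$, $C_m$ is the cycle $(1,m,m-1,\dots,2)$. *)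

theory Defs
  imports "HOL-Combinatorics.Permutations"
begin

text \<open>Elements of the free abelian group with basis w_ij (i<j) are represented as
  integer-valued functions on pairs (coefficient of the basis element w_ij at (i,j), i<j).
  The generator w_ij (any i,j) satisfies w_ij + w_ji = 0.\<close>
definition wvar :: "nat \<Rightarrow> nat \<Rightarrow> (nat \<times> nat \<Rightarrow> int)" where
  "wvar i j = (\<lambda>p. if i < j \<and> p = (i, j) then 1
                    else if j < i \<and> p = (j, i) then -1 else 0)"

definition Aexp :: "(nat \<Rightarrow> nat) \<Rightarrow> nat set \<Rightarrow> nat set \<Rightarrow> (nat \<times> nat \<Rightarrow> int)" where
  "Aexp \<sigma> I J = (\<lambda>p. (\<Sum>i\<in>I. \<Sum>l\<in>{1..<i}. wvar (\<sigma> l) (\<sigma> i) p)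
                     - (\<Sum>j\<in>J. \<Sum>l\<in>{1..<j}. wvar (\<sigma> l) (\<sigma> j) p))"

text \<open>S_n as permutations of {1..n}; S_{n-1} is the stabilizer of 1.\<close>
definition Sym :: "nat \<Rightarrow> (nat \<Rightarrow> nat) set" where
  "Sym n = {\<sigma>. \<sigma> permutes {1..n}}"

definition Sym1 :: "nat \<Rightarrow> (nat \<Rightarrow> nat) set" where
  "Sym1 n = {\<tau>. \<tau> permutes {1..n} \<and> \<tau> 1 = 1}"

definition Sym1coset :: "nat \<Rightarrow> nat \<Rightarrow> (nat \<Rightarrow> nat) set" where
  "Sym1coset n i = {\<tau> \<circ> Transposition.transpose 1 i | \<tau>. \<tau> \<in> Sym1 n}"

text \<open>The cycle C_m = (1, m, m-1, ..., 2): 1 maps to m, k maps to k-1 for 2 \<le> k \<le> m.\<close>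
definition Ccyc :: "nat \<Rightarrow> nat \<Rightarrow> nat" where
  "Ccyc m k = (if k = 1 then m else if 2 \<le> k \<and> k \<le> m then k - 1 else k)"

text \<open>For ms = [m_1,...,m_r]: C_{m_r}^{-1} o ... o C_{m_1}^{-1}.\<close>
definition Cprod_inv :: "nat list \<Rightarrow> nat \<Rightarrow> nat" where
  "Cprod_inv ms = fold (\<lambda>m f. inv (Ccyc m) \<circ> f) ms id"

definition triples :: "nat \<Rightarrow> (nat \<Rightarrow> nat) \<Rightarrow> ((nat \<Rightarrow> nat) \<times> nat set \<times> nat set) set" where
  "triples n \<sigma> = {(\<tau>, I, J). \<tau> \<in> Sym1 n \<and> I \<union> J = {2..n} \<and> I \<inter> J = {}
                        \<and> Aexp \<tau> I J = Aexp \<sigma> {2..n} {}}"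

end

theory Submission
  imports Defs
begin

text \<open>For a < b in {1..n}, the coefficient of w_ab in A^tau_{I,J} is +1 or -1, and it is +1
  exactly when tau^-1(a) precedes tau^-1(b) in the order on positions given by signed_index J,
  which lists J in decreasing order before 1 and [2,n] - J in increasing order.
  So A^tau_{I,J} = A^sigma_{[2,n],{}} says that sigma^-1 o tau is the rank permutation of
  this order. That permutation exists and is unique; it sends 1 to |J| + 1, so |J| + 1 =
  sigma^-1(1), and for J = {m_1 < ... < m_r} it is C_{m_r}^-1 o ... o C_{m_1}^-1.\<close>

definition same_order_on :: "'a set \<Rightarrow> ('a \<Rightarrow> 'b::linorder) \<Rightarrow> ('a \<Rightarrow> 'c::linorder) \<Rightarrow> bool" where
  "same_order_on S f g \<longleftrightarrow> (\<forall>u\<in>S. \<forall>v\<in>S. f u < f v \<longleftrightarrow> g u < g v)"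

lemma same_order_on_compose_permutes:
  assumes "h permutes S"
  shows "same_order_on S (f \<circ> h) (g \<circ> h) \<longleftrightarrow> same_order_on S f g"
proof -
  have "(\<forall>u\<in>S. \<forall>v\<in>S. P (h u) (h v)) \<longleftrightarrow> (\<forall>x\<in>h ` S. \<forall>y\<in>h ` S. P x y)" for P
    by blast
  then show ?thesis
    unfolding same_order_on_def o_def permutes_image[OF assms] .
qed

lemma same_order_on_of_nat_iff:
  "same_order_on S f (of_nat \<circ> g :: _ \<Rightarrow> 'c::linordered_semidom) \<longleftrightarrow> same_order_on S f g"
  unfolding same_order_on_def by simp

lemma same_order_on_iff_ordered_pairs:
  fixes f :: "'a::linorder \<Rightarrow> 'b::linorder" and g :: "'a \<Rightarrow> 'c::linorder"
  assumes "inj_on f S" "inj_on g S"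
  shows "same_order_on S f g \<longleftrightarrow> (\<forall>a\<in>S. \<forall>b\<in>S. a < b \<longrightarrow> (f a < f b \<longleftrightarrow> g a < g b))"
  unfolding same_order_on_def
proof (rule iffI, blast, intro ballI)
  fix u v assume pairs: "\<forall>a\<in>S. \<forall>b\<in>S. a < b \<longrightarrow> (f a < f b \<longleftrightarrow> g a < g b)" and "u \<in> S" "v \<in> S"
  consider "u < v" | "u = v" | "v < u" by fastforce
  then show "f u < f v \<longleftrightarrow> g u < g v"
  proof cases
    case 3
    then have "f u \<noteq> f v" "g u \<noteq> g v" using assms \<open>u \<in> S\<close> \<open>v \<in> S\<close> by (auto dest: inj_onD)
    then have "f u < f v \<longleftrightarrow> \<not> f v < f u" "g u < g v \<longleftrightarrow> \<not> g v < g u" by auto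
    then show ?thesis using pairs 3 \<open>u \<in> S\<close> \<open>v \<in> S\<close> by auto
  qed (use pairs \<open>u \<in> S\<close> \<open>v \<in> S\<close> in auto)
qed

lemma permutes_same_order_rank:
  fixes \<rho> :: "nat \<Rightarrow> nat"
  assumes "\<rho> permutes {1..n}" "same_order_on {1..n} f \<rho>" "a \<in> {1..n}"
  shows "\<rho> a = card {x\<in>{1..n}. f x < f a} + 1"
proof -
  have "{x\<in>{1..n}. f x < f a} = {x\<in>{1..n}. \<rho> x < \<rho> a}"
    using assms(2,3) unfolding same_order_on_def by auto
  moreover have "\<rho> ` {x\<in>{1..n}. \<rho> x < \<rho> a} = {1..<\<rho> a}"
  proof -
    have "\<rho> ` {x\<in>{1..n}. \<rho> x < \<rho> a} = {y\<in>\<rho> ` {1..n}. y < \<rho> a}" by auto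
    also have "\<dots> = {1..<\<rho> a}"
      using permutes_image[OF assms(1)] permutes_in_image[OF assms(1), of a] assms(3) by auto
    finally show ?thesis .
  qed
  moreover have "inj_on \<rho> {x\<in>{1..n}. \<rho> x < \<rho> a}"
    using permutes_inj[OF assms(1)] by (auto intro: inj_on_subset)
  ultimately have "card {x\<in>{1..n}. f x < f a} = \<rho> a - 1"
    by (metis card_image card_atLeastLessThan)
  moreover have "\<rho> a \<ge> 1" using permutes_in_image[OF assms(1)] assms(3) by auto
  ultimately show ?thesis by simp
qed

lemma permutes_same_order_unique:
  fixes \<rho> \<rho>' :: "nat \<Rightarrow> nat"
  assumes "\<rho> permutes {1..n}" "\<rho>' permutes {1..n}"
    and "same_order_on {1..n} f \<rho>" "same_order_on {1..n} f \<rho>'"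
  shows "\<rho> = \<rho>'"
proof
  fix a show "\<rho> a = \<rho>' a"
    using permutes_same_order_rank[OF assms(1,3)] permutes_same_order_rank[OF assms(2,4)]
      permutes_not_in[OF assms(1)] permutes_not_in[OF assms(2)] by (cases "a \<in> {1..n}") auto
qed

lemma permutes_same_order_exists:
  fixes f :: "nat \<Rightarrow> 'a::linorder"
  assumes inj: "inj_on f {1..n}"
  shows "\<exists>\<rho>. \<rho> permutes {1..n} \<and> same_order_on {1..n} f \<rho>"
proof -
  define S where "S = {1..n}"
  define \<rho> where "\<rho> a = (if a \<in> S then card {x\<in>S. f x < f a} + 1 else a)" for a
  have mono: "\<rho> a < \<rho> b" if "a \<in> S" "b \<in> S" "f a < f b" for a b
  proof -
    have "{x\<in>S. f x < f a} \<subset> {x\<in>S. f x < f b}" using that by auto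
    then have "card {x\<in>S. f x < f a} < card {x\<in>S. f x < f b}"
      by (rule psubset_card_mono[rotated]) (simp add: S_def)
    then show ?thesis using that unfolding \<rho>_def by simp
  qed
  have same: "same_order_on S f \<rho>"
    unfolding same_order_on_def
  proof (intro ballI iffI)
    fix a b assume ab: "a \<in> S" "b \<in> S" and "\<rho> a < \<rho> b"
    then have "\<not> f b < f a" "a \<noteq> b" using mono by (auto dest: less_asym)
    with inj ab show "f a < f b" unfolding S_def by (metis inj_onD linorder_neqE)
  qed (use mono in auto)
  have "inj_on \<rho> S"
    by (rule inj_onI) (use same inj in \<open>metis S_def same_order_on_def inj_onD less_irrefl linorder_neqE\<close>)
  moreover have "\<rho> ` S \<subseteq> S"
  proof
    fix y assume "y \<in> \<rho> ` S"
    then obtain a where a: "a \<in> S" and y: "y = \<rho> a" by auto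
    have "card {x\<in>S. f x < f a} \<le> card (S - {a})"
      by (rule card_mono) (auto simp: S_def)
    then show "y \<in> S" using a y unfolding \<rho>_def S_def by auto
  qed
  ultimately have "bij_betw \<rho> S S"
    unfolding bij_betw_def by (simp add: S_def endo_inj_surj)
  then have "\<rho> permutes S"
    by (rule bij_imp_permutes) (simp add: \<rho>_def)
  with same show ?thesis unfolding S_def by blast
qed

definition signed_index :: "nat set \<Rightarrow> nat \<Rightarrow> int" where
  "signed_index J k = (if k \<in> J then - int k else int k)"

lemma inj_signed_index: "inj (signed_index J)"
  by (rule injI) (auto simp: signed_index_def split: if_splits)

lemma signed_index_empty: "signed_index {} = of_nat"
  by (simp add: signed_index_def fun_eq_iff)

lemma wvar_apply:
  "wvar x y (a, b) = (if a < b \<and> x = a \<and> y = b then 1 else if a < b \<and> x = b \<and> y = a then -1 else 0)"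
  unfolding wvar_def by auto

lemma Aexp_eq_weighted_pair_sum:
  assumes "J \<subseteq> {2..n}"
  shows "Aexp \<tau> ({2..n} - J) J p =
    (\<Sum>(k, l)\<in>Sigma {2..n} (\<lambda>k. {1..<k}). (if k \<in> J then -1 else 1) * wvar (\<tau> l) (\<tau> k) p)"
proof -
  let ?c = "\<lambda>k. \<Sum>l\<in>{1..<k}. wvar (\<tau> l) (\<tau> k) p"
  have "Aexp \<tau> ({2..n} - J) J p = (\<Sum>k\<in>{2..n} - J. ?c k) + (\<Sum>k\<in>J. - ?c k)"
    unfolding Aexp_def by (simp add: sum_negf)
  also have "\<dots> = (\<Sum>k\<in>{2..n}. (if k \<in> J then -1 else 1) * ?c k)"
    using sum.subset_diff[OF assms, of "\<lambda>k. (if k \<in> J then -1 else 1) * ?c k"] by simp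
  finally show ?thesis by (simp add: sum_distrib_left sum.Sigma)
qed

lemma weighted_pair_sum_wvar:
  fixes e :: "nat \<Rightarrow> int"
  assumes \<tau>: "\<tau> permutes {1..n}"
  shows "(\<Sum>(k, l)\<in>Sigma {2..n} (\<lambda>k. {1..<k}). e k * wvar (\<tau> l) (\<tau> k) (a, b)) =
    (if a < b \<and> a \<in> {1..n} \<and> b \<in> {1..n}
     then (if inv \<tau> a < inv \<tau> b then e (inv \<tau> b) else - e (inv \<tau> a)) else 0)"
proof (cases "a < b \<and> a \<in> {1..n} \<and> b \<in> {1..n}")
  case False
  have "\<tau> k \<in> {1..n}" if "k \<in> {1..n}" for k using that permutes_in_image[OF \<tau>] by auto
  then have "\<forall>x\<in>Sigma {2..n} (\<lambda>k. {1..<k}). (case x of (k, l) \<Rightarrow> e k * wvar (\<tau> l) (\<tau> k) (a, b)) = 0"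
    using False by (auto simp: wvar_apply)
  then show ?thesis using False by (simp only: sum.neutral if_False)
next
  case True
  define ia ib where "ia = inv \<tau> a" and "ib = inv \<tau> b"
  have ia: "ia \<in> {1..n}" and ib: "ib \<in> {1..n}"
    using True permutes_in_image[OF permutes_inv[OF \<tau>]] unfolding ia_def ib_def by auto
  have "ia \<noteq> ib"
    using True permutes_inverses(1)[OF \<tau>, of a] permutes_inverses(1)[OF \<tau>, of b]
    unfolding ia_def ib_def by auto
  have pos: "\<tau> l = a \<longleftrightarrow> l = ia" "\<tau> l = b \<longleftrightarrow> l = ib" for l
    unfolding ia_def ib_def using permutes_inverses[OF \<tau>] by auto
  let ?T = "Sigma {2..n} (\<lambda>k. {1..<k})"
  have "(case x of (k, l) \<Rightarrow> e k * wvar (\<tau> l) (\<tau> k) (a, b)) =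
      (if x = (ib, ia) then e ib else 0) + (if x = (ia, ib) then - e ia else 0)" if "x \<in> ?T" for x
  proof -
    obtain k l where x: "x = (k, l)" and "l < k" using \<open>x \<in> ?T\<close> by auto
    then show ?thesis using True unfolding wvar_apply pos by auto
  qed
  then have "(\<Sum>(k, l)\<in>?T. e k * wvar (\<tau> l) (\<tau> k) (a, b)) =
      (\<Sum>x\<in>?T. (if x = (ib, ia) then e ib else 0) + (if x = (ia, ib) then - e ia else 0))"
    by (rule sum.cong[OF refl])
  also have "\<dots> = (if (ib, ia) \<in> ?T then e ib else 0) + (if (ia, ib) \<in> ?T then - e ia else 0)"
    by (simp add: sum.distrib)
  also have "\<dots> = (if ia < ib then e ib else - e ia)"
    using ia ib \<open>ia \<noteq> ib\<close> by auto
  finally show ?thesis using True unfolding ia_def ib_def by simp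
qed

lemma Aexp_apply:
  assumes "\<tau> permutes {1..n}" "J \<subseteq> {2..n}"
  shows "Aexp \<tau> ({2..n} - J) J (a, b) =
    (if a < b \<and> a \<in> {1..n} \<and> b \<in> {1..n}
     then (if signed_index J (inv \<tau> a) < signed_index J (inv \<tau> b) then 1 else -1) else 0)"
proof -
  have "inv \<tau> a \<in> {1..n} \<longleftrightarrow> a \<in> {1..n}" "inv \<tau> b \<in> {1..n} \<longleftrightarrow> b \<in> {1..n}"
    "inv \<tau> a = inv \<tau> b \<longleftrightarrow> a = b"
    using permutes_in_image[OF permutes_inv[OF assms(1)]] permutes_inv_eq[OF assms(1)] by auto
  then show ?thesis
    unfolding Aexp_eq_weighted_pair_sum[OF assms(2)] weighted_pair_sum_wvar[OF assms(1)]
    using assms(2) by (auto simp: signed_index_def)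
qed

lemma Aexp_eq_Aexp_iff:
  assumes "\<tau> permutes {1..n}" "\<tau>' permutes {1..n}" "J \<subseteq> {2..n}" "J' \<subseteq> {2..n}"
  shows "Aexp \<tau> ({2..n} - J) J = Aexp \<tau>' ({2..n} - J') J' \<longleftrightarrow>
    same_order_on {1..n} (signed_index J \<circ> inv \<tau>) (signed_index J' \<circ> inv \<tau>')"
proof -
  have "inj_on (signed_index K \<circ> inv \<rho>) {1..n}" if "\<rho> permutes {1..n}" for K \<rho>
    by (rule inj_on_subset[OF inj_compose[OF inj_signed_index permutes_inj[OF permutes_inv[OF that]]]])
      simp
  then have "same_order_on {1..n} (signed_index J \<circ> inv \<tau>) (signed_index J' \<circ> inv \<tau>') \<longleftrightarrow>
    (\<forall>a\<in>{1..n}. \<forall>b\<in>{1..n}. a < b \<longrightarrow> Aexp \<tau> ({2..n} - J) J (a, b) = Aexp \<tau>' ({2..n} - J') J' (a, b))"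
    using assms by (auto simp add: same_order_on_iff_ordered_pairs Aexp_apply)
  also have "\<dots> \<longleftrightarrow> Aexp \<tau> ({2..n} - J) J = Aexp \<tau>' ({2..n} - J') J'"
  proof
    assume pairs: "\<forall>a\<in>{1..n}. \<forall>b\<in>{1..n}. a < b \<longrightarrow>
      Aexp \<tau> ({2..n} - J) J (a, b) = Aexp \<tau>' ({2..n} - J') J' (a, b)"
    show "Aexp \<tau> ({2..n} - J) J = Aexp \<tau>' ({2..n} - J') J'"
    proof (rule ext, clarify)
      fix a b
      show "Aexp \<tau> ({2..n} - J) J (a, b) = Aexp \<tau>' ({2..n} - J') J' (a, b)"
        using pairs by (cases "a < b \<and> a \<in> {1..n} \<and> b \<in> {1..n}") (simp_all add: Aexp_apply[OF assms(1,3)] Aexp_apply[OF assms(2,4)])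
    qed
  qed simp
  finally show ?thesis ..
qed

lemma Aexp_eq_Aexp_full_iff:
  assumes "\<sigma> permutes {1..n}" "\<tau> permutes {1..n}" "J \<subseteq> {2..n}"
  shows "Aexp \<tau> ({2..n} - J) J = Aexp \<sigma> {2..n} {} \<longleftrightarrow>
    same_order_on {1..n} (signed_index J) (inv \<sigma> \<circ> \<tau>)"
proof -
  have "Aexp \<tau> ({2..n} - J) J = Aexp \<sigma> {2..n} {} \<longleftrightarrow>
    same_order_on {1..n} (signed_index J \<circ> inv \<tau>) (int \<circ> inv \<sigma>)"
    using Aexp_eq_Aexp_iff[OF assms(2,1,3), of "{}"] by (simp add: signed_index_empty)
  also have "\<dots> \<longleftrightarrow> same_order_on {1..n} (signed_index J \<circ> inv \<tau> \<circ> \<tau>) (int \<circ> inv \<sigma> \<circ> \<tau>)"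
    by (rule same_order_on_compose_permutes[OF assms(2), symmetric])
  also have "\<dots> \<longleftrightarrow> same_order_on {1..n} (signed_index J) (inv \<sigma> \<circ> \<tau>)"
    unfolding comp_assoc permutes_inv_o(2)[OF assms(2)] same_order_on_of_nat_iff by simp
  finally show ?thesis .
qed

lemma Aexp_full_eq_exists:
  assumes \<tau>: "\<tau> permutes {1..n}" and J: "J \<subseteq> {2..n}"
  shows "\<exists>\<sigma>. \<sigma> permutes {1..n} \<and> Aexp \<sigma> {2..n} {} = Aexp \<tau> ({2..n} - J) J"
proof -
  obtain \<rho> where \<rho>: "\<rho> permutes {1..n}" "same_order_on {1..n} (signed_index J) \<rho>"
    using permutes_same_order_exists[OF inj_on_subset[OF inj_signed_index]] by blast
  have \<sigma>: "\<tau> \<circ> inv \<rho> permutes {1..n}" by (rule permutes_compose[OF permutes_inv[OF \<rho>(1)] \<tau>])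
  have "inv (\<tau> \<circ> inv \<rho>) \<circ> \<tau> = \<rho>"
    using permutes_inv_eq[OF \<sigma>] permutes_inverses(2)[OF \<rho>(1)] by (auto simp: fun_eq_iff)
  then show ?thesis
    using Aexp_eq_Aexp_full_iff[OF \<sigma> \<tau> J] \<rho>(2) \<sigma> by auto
qed

lemma mem_triples_iff:
  assumes "\<sigma> permutes {1..n}"
  shows "(\<tau>, I, J) \<in> triples n \<sigma> \<longleftrightarrow> \<tau> \<in> Sym1 n \<and> J \<subseteq> {2..n} \<and> I = {2..n} - J \<and>
    same_order_on {1..n} (signed_index J) (inv \<sigma> \<circ> \<tau>)"
proof -
  have "I \<union> J = {2..n} \<and> I \<inter> J = {} \<longleftrightarrow> J \<subseteq> {2..n} \<and> I = {2..n} - J" by blast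
  then show ?thesis
    unfolding triples_def Sym1_def using Aexp_eq_Aexp_full_iff[OF assms] by auto
qed

lemma signed_index_less_one:
  assumes "J \<subseteq> {2..n}"
  shows "{x\<in>{1..n}. signed_index J x < signed_index J 1} = J"
  using assms by (auto simp: signed_index_def)

lemma triples_card:
  assumes "\<sigma> permutes {1..n}" "1 \<le> n" "(\<tau>, I, J) \<in> triples n \<sigma>"
  shows "inv \<sigma> 1 = card J + 1"
proof -
  from assms(3) have \<tau>: "\<tau> permutes {1..n}" "\<tau> 1 = 1" and J: "J \<subseteq> {2..n}"
    and ord: "same_order_on {1..n} (signed_index J) (inv \<sigma> \<circ> \<tau>)"
    unfolding mem_triples_iff[OF assms(1)] Sym1_def by auto
  have "(inv \<sigma> \<circ> \<tau>) 1 = card J + 1"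
    using permutes_same_order_rank[OF permutes_compose[OF \<tau>(1) permutes_inv[OF assms(1)]] ord]
      assms(2) signed_index_less_one[OF J] by simp
  with \<tau>(2) show ?thesis by simp
qed

lemma triples_unique:
  assumes "\<sigma> permutes {1..n}" "(\<tau>, I, J) \<in> triples n \<sigma>" "(\<tau>', I', J) \<in> triples n \<sigma>"
  shows "\<tau> = \<tau>'"
proof -
  have "inv \<sigma> \<circ> \<tau> = inv \<sigma> \<circ> \<tau>'"
    using assms permutes_same_order_unique permutes_compose permutes_inv
    unfolding mem_triples_iff[OF assms(1)] Sym1_def by (metis (no_types, lifting) mem_Collect_eq)
  then have "\<sigma> \<circ> (inv \<sigma> \<circ> \<tau>) = \<sigma> \<circ> (inv \<sigma> \<circ> \<tau>')" by simp
  then show ?thesis by (simp add: comp_assoc[symmetric] permutes_inv_o[OF assms(1)])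
qed

definition Ccyc_inv :: "nat \<Rightarrow> nat \<Rightarrow> nat" where
  "Ccyc_inv m k = (if k = m then 1 else if 1 \<le> k \<and> k < m then k + 1 else k)"

lemma Ccyc_inv_Ccyc: "2 \<le> m \<Longrightarrow> Ccyc_inv m (Ccyc m k) = k"
  and Ccyc_Ccyc_inv: "2 \<le> m \<Longrightarrow> Ccyc m (Ccyc_inv m k) = k"
  unfolding Ccyc_inv_def Ccyc_def by auto

lemma inv_Ccyc: "2 \<le> m \<Longrightarrow> inv (Ccyc m) = Ccyc_inv m"
  by (rule inv_equality) (simp_all add: Ccyc_inv_Ccyc Ccyc_Ccyc_inv)

lemma Ccyc_permutes:
  assumes "2 \<le> m" "m \<le> n"
  shows "Ccyc m permutes {1..n}"
proof (rule bij_imp_permutes)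
  show "bij_betw (Ccyc m) {1..n} {1..n}"
    by (rule bij_betwI[where g = "Ccyc_inv m"])
      (use assms in \<open>auto simp: Ccyc_def Ccyc_inv_def\<close>)
qed (use assms in \<open>auto simp: Ccyc_def\<close>)

lemma Ccyc_inv_permutes: "2 \<le> m \<Longrightarrow> m \<le> n \<Longrightarrow> Ccyc_inv m permutes {1..n}"
  using permutes_inv[OF Ccyc_permutes] inv_Ccyc by metis

lemma Cprod_inv_snoc: "2 \<le> m \<Longrightarrow> Cprod_inv (ms @ [m]) = Ccyc_inv m \<circ> Cprod_inv ms"
  unfolding Cprod_inv_def by (simp add: inv_Ccyc)

lemma Cprod_inv_Nil: "Cprod_inv [] = id"
  by (simp add: Cprod_inv_def)

lemma Cprod_inv_permutes: "set ms \<subseteq> {2..n} \<Longrightarrow> Cprod_inv ms permutes {1..n}"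
proof (induction ms rule: rev_induct)
  case Nil
  show ?case unfolding Cprod_inv_Nil by (rule permutes_id)
next
  case (snoc m ms)
  then have "2 \<le> m" "m \<le> n" "set ms \<subseteq> {2..n}" by auto
  with snoc.IH show ?case
    unfolding Cprod_inv_snoc[OF \<open>2 \<le> m\<close>] by (intro permutes_compose Ccyc_inv_permutes)
qed

lemma Cprod_inv_fixes: "\<forall>m\<in>set ms. 2 \<le> m \<and> m < k \<Longrightarrow> Cprod_inv ms k = k"
  by (induction ms rule: rev_induct) (auto simp: Cprod_inv_Nil Cprod_inv_snoc Ccyc_inv_def)

text \<open>Ccyc_inv m sends m to 1 and shifts 1, ..., m - 1 up by one; this is where m belongs
  in the new order, since its signed index -m is smaller than all others.\<close>
lemma same_order_on_insert_Ccyc_inv: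
  assumes P: "P permutes {1..n}" "P m = m" and J: "\<forall>j\<in>J. j < m" and "2 \<le> m"
    and ord: "same_order_on {1..n} (signed_index J) P"
  shows "same_order_on {1..n} (signed_index (insert m J)) (Ccyc_inv m \<circ> P)"
  unfolding same_order_on_def
proof (intro ballI)
  fix u v assume u: "u \<in> {1..n}" and v: "v \<in> {1..n}"
  have PS: "P u \<in> {1..n}" "P v \<in> {1..n}" using u v permutes_in_image[OF P(1)] by auto
  have Pm: "P u = m \<longleftrightarrow> u = m" "P v = m \<longleftrightarrow> v = m"
    using P permutes_inj[OF P(1)] by (metis injD)+
  have "m \<notin> J" using J by auto
  consider "u = m" | "u \<noteq> m" "v = m" | "u \<noteq> m" "v \<noteq> m" by blast
  then show "signed_index (insert m J) u < signed_index (insert m J) v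
      \<longleftrightarrow> (Ccyc_inv m \<circ> P) u < (Ccyc_inv m \<circ> P) v"
  proof cases
    case 1
    then show ?thesis using J u v PS Pm \<open>2 \<le> m\<close> by (auto simp: signed_index_def Ccyc_inv_def)
  next
    case 2
    then show ?thesis using J u v PS Pm \<open>2 \<le> m\<close> by (auto simp: signed_index_def Ccyc_inv_def)
  next
    case 3
    then have "signed_index (insert m J) u < signed_index (insert m J) v \<longleftrightarrow> P u < P v"
      using ord u v by (simp add: same_order_on_def signed_index_def)
    then show ?thesis using 3 PS Pm by (auto simp: Ccyc_inv_def)
  qed
qed

lemma Cprod_inv_same_order:
  assumes "sorted_wrt (<) ms" "set ms \<subseteq> {2..n}"
  shows "same_order_on {1..n} (signed_index (set ms)) (Cprod_inv ms)"
  using assms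
proof (induction ms rule: rev_induct)
  case Nil
  then show ?case by (simp add: Cprod_inv_Nil same_order_on_def signed_index_def)
next
  case (snoc m ms)
  then have lt: "\<forall>j\<in>set ms. j < m" and "2 \<le> m" "sorted_wrt (<) ms" and ms: "set ms \<subseteq> {2..n}"
    by (auto simp: sorted_wrt_append)
  with snoc.IH have IH: "same_order_on {1..n} (signed_index (set ms)) (Cprod_inv ms)" by blast
  have set_snoc: "set (ms @ [m]) = insert m (set ms)" by simp
  show ?case
    unfolding Cprod_inv_snoc[OF \<open>2 \<le> m\<close>] set_snoc using IH lt ms \<open>2 \<le> m\<close>
    by (intro same_order_on_insert_Ccyc_inv Cprod_inv_permutes Cprod_inv_fixes) auto
qed

lemma Cprod_inv_one:
  assumes "sorted_wrt (<) ms" "set ms \<subseteq> {2..n}" "1 \<le> n"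
  shows "Cprod_inv ms 1 = length ms + 1"
proof -
  have "Cprod_inv ms 1 = card (set ms) + 1"
    using permutes_same_order_rank[OF Cprod_inv_permutes[OF assms(2)] Cprod_inv_same_order[OF assms(1,2)]]
      assms(3) signed_index_less_one[OF assms(2)] by simp
  with assms(1) show ?thesis by (simp add: strict_sorted_iff distinct_card)
qed

lemma Cprod_inv_mem_triples:
  assumes \<sigma>: "\<sigma> permutes {1..n}" "\<sigma> i = 1" and "i \<in> {1..n}"
    and ms: "sorted_wrt (<) ms" "length ms = i - 1" "set ms \<subseteq> {2..n}"
  shows "(\<sigma> \<circ> Cprod_inv ms, {2..n} - set ms, set ms) \<in> triples n \<sigma>"
proof -
  have P: "Cprod_inv ms permutes {1..n}" by (rule Cprod_inv_permutes[OF ms(3)])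
  have "Cprod_inv ms 1 = i" using Cprod_inv_one[OF ms(1,3)] ms(2) \<open>i \<in> {1..n}\<close> by simp
  then have "\<sigma> \<circ> Cprod_inv ms \<in> Sym1 n"
    using permutes_compose[OF P \<sigma>(1)] \<sigma>(2) by (simp add: Sym1_def)
  moreover have "inv \<sigma> \<circ> (\<sigma> \<circ> Cprod_inv ms) = Cprod_inv ms"
    by (simp add: comp_assoc[symmetric] permutes_inv_o[OF \<sigma>(1)])
  ultimately show ?thesis
    using Cprod_inv_same_order[OF ms(1,3)] ms(3) by (simp add: mem_triples_iff[OF \<sigma>(1)])
qed

lemma triples_eq_Cprod_inv_image:
  assumes \<sigma>: "\<sigma> permutes {1..n}" "\<sigma> i = 1" and i: "i \<in> {1..n}"
  shows "triples n \<sigma> = (\<lambda>ms. (\<sigma> \<circ> Cprod_inv ms, {2..n} - set ms, set ms)) `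
    {ms. sorted_wrt (<) ms \<and> length ms = i - 1 \<and> set ms \<subseteq> {2..n}}"
proof (intro equalityI subsetI)
  fix x assume x: "x \<in> triples n \<sigma>"
  then obtain \<tau> I J where [simp]: "x = (\<tau>, I, J)" by (cases x) blast
  from x have J: "J \<subseteq> {2..n}" and I: "I = {2..n} - J"
    by (simp_all add: mem_triples_iff[OF \<sigma>(1)])
  have "inv \<sigma> 1 = i" using permutes_inv_eq[OF \<sigma>(1)] \<sigma>(2) by simp
  then have "card J = i - 1" using triples_card[OF \<sigma>(1) _ x[simplified]] i by simp
  moreover obtain ms where ms: "sorted_wrt (<) ms" "set ms = J"
    using sorted_list_of_set.finite_set_strict_sorted finite_subset[OF J] by blast
  ultimately have "length ms = i - 1" by (metis distinct_card strict_sorted_iff)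
  with ms J have "(\<sigma> \<circ> Cprod_inv ms, I, J) \<in> triples n \<sigma>"
    using Cprod_inv_mem_triples[OF \<sigma> i] I by auto
  with x have "\<tau> = \<sigma> \<circ> Cprod_inv ms" using triples_unique[OF \<sigma>(1)] by simp
  with ms J I \<open>length ms = i - 1\<close>
  show "x \<in> (\<lambda>ms. (\<sigma> \<circ> Cprod_inv ms, {2..n} - set ms, set ms)) `
    {ms. sorted_wrt (<) ms \<and> length ms = i - 1 \<and> set ms \<subseteq> {2..n}}" by auto
qed (use Cprod_inv_mem_triples[OF \<sigma> i] in auto)

theorem lemma3p4:
  fixes n :: nat
  assumes "n \<ge> 2"
  shows "(\<forall>\<tau> I J. \<tau> \<in> Sym1 n \<and> I \<union> J = {2..n} \<and> I \<inter> J = {} \<longrightarrow>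
            (\<exists>\<sigma> \<in> Sym n. Aexp \<sigma> {2..n} {} = Aexp \<tau> I J))
       \<and> (\<forall>\<sigma> \<in> Sym1 n. triples n \<sigma> = {(\<sigma>, {2..n}, {})})
       \<and> (\<forall>i \<in> {2..n}. \<forall>\<sigma> \<in> Sym1coset n i.
            triples n \<sigma> =
              (\<lambda>ms. (\<sigma> \<circ> Cprod_inv ms, {2..n} - set ms, set ms)) `
                {ms. sorted_wrt (<) ms \<and> length ms = i - 1 \<and> set ms \<subseteq> {2..n}}
          \<and> inj_on (\<lambda>ms. (\<sigma> \<circ> Cprod_inv ms, {2..n} - set ms, set ms))
                {ms. sorted_wrt (<) ms \<and> length ms = i - 1 \<and> set ms \<subseteq> {2..n}})"
proof (intro conjI allI impI ballI)
  fix \<tau> I J assume "\<tau> \<in> Sym1 n \<and> I \<union> J = {2..n} \<and> I \<inter> J = {}"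
  then have "\<tau> permutes {1..n}" "J \<subseteq> {2..n}" "I = {2..n} - J" by (auto simp: Sym1_def)
  then show "\<exists>\<sigma> \<in> Sym n. Aexp \<sigma> {2..n} {} = Aexp \<tau> I J"
    using Aexp_full_eq_exists by (auto simp: Sym_def)
next
  fix \<sigma> assume "\<sigma> \<in> Sym1 n"
  moreover have "{ms. sorted_wrt (<) ms \<and> length ms = 1 - 1 \<and> set ms \<subseteq> {2..n}} = {[]}" by auto
  ultimately have "triples n \<sigma> = (\<lambda>ms. (\<sigma> \<circ> Cprod_inv ms, {2..n} - set ms, set ms)) ` {[]}"
    using triples_eq_Cprod_inv_image[of \<sigma> n 1] assms by (simp add: Sym1_def)
  then show "triples n \<sigma> = {(\<sigma>, {2..n}, {})}" by (simp add: Cprod_inv_Nil)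
next
  fix i \<sigma> assume i: "i \<in> {2..n}" and "\<sigma> \<in> Sym1coset n i"
  then obtain \<tau> where \<tau>: "\<tau> permutes {1..n}" "\<tau> 1 = 1" and \<sigma>_def: "\<sigma> = \<tau> \<circ> transpose 1 i"
    by (auto simp: Sym1coset_def Sym1_def)
  have "\<sigma> permutes {1..n}"
    unfolding \<sigma>_def using i by (intro permutes_compose[OF permutes_swap_id \<tau>(1)]) auto
  moreover have "\<sigma> i = 1" using \<tau>(2) by (simp add: \<sigma>_def)
  ultimately show "triples n \<sigma> = (\<lambda>ms. (\<sigma> \<circ> Cprod_inv ms, {2..n} - set ms, set ms)) `
    {ms. sorted_wrt (<) ms \<and> length ms = i - 1 \<and> set ms \<subseteq> {2..n}}"
    using triples_eq_Cprod_inv_image i by simp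
next
  fix i \<sigma>
  show "inj_on (\<lambda>ms. (\<sigma> \<circ> Cprod_inv ms, {2..n} - set ms, set ms))
    {ms. sorted_wrt (<) ms \<and> length ms = i - 1 \<and> set ms \<subseteq> {2..n}}"
    by (auto intro: inj_onI strict_sorted_equal)
qed

end
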